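(* Let $X,Y$ be real Hilbert spaces and $A\colon X\to Y$ compact linear with singular system $(\sigma_i,u_i,v_i)_{i\ge1}$, $\sigma_i>0$. Let $N\ge1$ and $x^\dagger=\sum_{i=1}^N c_iv_i$ with $c_i=\langle x^\dagger,v_i\rangle\neq0$ for $i=1,\dots,N$. Let $y^\delta=Ax^\dagger+\eta$ where $\eta$ is a $Y$-valued random variable such that the coefficients $\eta_i=\langle\eta,u_i\rangle$ satisfy $\mathbb E[\eta_i]=0$ and $\mathbb E[\eta_i^2]=\beta_{\eta,i}^2<\infty$ for all $i$. For $M\in\mathbb N$ let $E_M=T^{(M)}_\alpha y^\delta-x^\dagger$. If $\alpha>0$ satisfies $$2\alpha\ge\max\Big\{0,\ \max_{0\le m<N}\Big(\frac{\beta_{\eta,m+1}^2}{c_{m+1}^2}-\sigma_{m+1}^2\Big)\Big\},$$ then $\mathbb E\big[\|E_N\|^2\big]\le\mathbb E\big[\|E_M\|^2\big]$ for all $M\in\mathbb N$.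
   Context: The singular system means $Ax=\sum_i\sigma_i\langle x,v_i\rangle u_i$ with $(v_i)$, $(u_i)$ orthonormal families. The truncated Tikhonov regularization is $T^{(M)}_\alpha y=\sum_{i=1}^M\frac{\sigma_i}{\sigma_i^2+\alpha}\langle y,u_i\rangle v_i$ (for $M=0$ the empty sum, i.e. $T^{(0)}_\alpha=0$). *)

theory Defs
  imports "HOL-Probability.Probability"
begin

definition compact_operator :: "('x::real_normed_vector \<Rightarrow> 'y::real_normed_vector) \<Rightarrow> bool" where
  "compact_operator A \<longleftrightarrow> bounded_linear A \<and> compact (closure (A ` cball 0 1))"

definition singular_system ::
  "('x::real_inner \<Rightarrow> 'y::real_inner) \<Rightarrow> (nat \<Rightarrow> real) \<Rightarrow> (nat \<Rightarrow> 'y) \<Rightarrow> (nat \<Rightarrow> 'x) \<Rightarrow> bool" where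
  "singular_system A \<sigma> u v \<longleftrightarrow>
     (\<forall>i\<ge>1. \<sigma> i > 0) \<and>
     (\<forall>i\<ge>1. \<forall>j\<ge>i. \<sigma> j \<le> \<sigma> i) \<and>
     (\<forall>i\<ge>1. \<forall>j\<ge>1. inner (u i) (u j) = (if i = j then 1 else 0)) \<and>
     (\<forall>i\<ge>1. \<forall>j\<ge>1. inner (v i) (v j) = (if i = j then 1 else 0)) \<and>
     (\<forall>x. ((\<lambda>i. (\<sigma> i * inner x (v i)) *\<^sub>R u i) has_sum A x) {1..})"

definition tikh_trunc ::
  "(nat \<Rightarrow> real) \<Rightarrow> (nat \<Rightarrow> 'y::real_inner) \<Rightarrow> (nat \<Rightarrow> 'x::real_inner) \<Rightarrow> nat \<Rightarrow> real \<Rightarrow> 'y \<Rightarrow> 'x" where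
  "tikh_trunc \<sigma> u v M \<alpha> y = (\<Sum>i = 1..M. (\<sigma> i / (\<sigma> i ^ 2 + \<alpha>) * inner y (u i)) *\<^sub>R v i)"

end

theory Submission
  imports Defs
begin

text \<open>In the singular basis the error of the truncated Tikhonov estimate has coordinates
  \<open>(\<sigma>\<^sub>i \<eta>\<^sub>i - \<alpha> c\<^sub>i) / (\<sigma>\<^sub>i\<^sup>2 + \<alpha>)\<close> for a regularised index \<open>i \<le> M\<close> and \<open>-c\<^sub>i\<close> for a truncated
  one, with mean squares \<open>((\<alpha> c\<^sub>i)\<^sup>2 + (\<sigma>\<^sub>i \<beta>\<^sub>i)\<^sup>2) / (\<sigma>\<^sub>i\<^sup>2 + \<alpha>)\<^sup>2\<close> and \<open>c\<^sub>i\<^sup>2\<close>. So the mean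
  squared error is a sum over indices of one of two options, and \<open>M = N\<close> picks the cheaper one
  at every index: beyond \<open>N\<close> we have \<open>c\<^sub>i = 0\<close>, so truncating costs nothing, and up to \<open>N\<close>
  the condition on \<open>\<alpha>\<close>, i.e. \<open>\<beta>\<^sub>i\<^sup>2 \<le> c\<^sub>i\<^sup>2 (\<sigma>\<^sub>i\<^sup>2 + 2\<alpha>)\<close>, is exactly what makes regularising
  cheaper. Only the first two moments of the \<open>\<eta>\<^sub>i\<close> enter.\<close>

definition orthonormal_on :: "'i set \<Rightarrow> ('i \<Rightarrow> 'a::real_inner) \<Rightarrow> bool" where
  "orthonormal_on I v \<longleftrightarrow> (\<forall>i\<in>I. \<forall>j\<in>I. inner (v i) (v j) = (if i = j then 1 else 0))"

lemma singular_system_orthonormal: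
  assumes "singular_system A \<sigma> u v"
  shows "orthonormal_on {1..} u" "orthonormal_on {1..} v"
  using assms unfolding singular_system_def orthonormal_on_def by auto

lemma norm_sum_orthonormal:
  assumes "orthonormal_on I v" "finite S" "S \<subseteq> I"
  shows "(norm (\<Sum>i\<in>S. d i *\<^sub>R v i))\<^sup>2 = (\<Sum>i\<in>S. (d i)\<^sup>2)"
proof -
  have "pairwise (\<lambda>i j. orthogonal (d i *\<^sub>R v i) (d j *\<^sub>R v j)) S"
    using assms unfolding pairwise_def orthogonal_def orthonormal_on_def by (auto simp: subset_iff)
  moreover have "norm (v i) = 1" if "i \<in> S" for i
    using assms that by (simp add: orthonormal_on_def norm_eq_1 subset_iff)
  ultimately show ?thesis
    using assms(2) by (simp add: norm_sum_Pythagorean power_mult_distrib)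
qed

lemma inner_sum_orthonormal:
  assumes "orthonormal_on I v" "finite S" "S \<subseteq> I" "i \<in> I"
  shows "inner (\<Sum>j\<in>S. d j *\<^sub>R v j) (v i) = (if i \<in> S then d i else 0)"
proof -
  have "inner (\<Sum>j\<in>S. d j *\<^sub>R v j) (v i) = (\<Sum>j\<in>S. if j = i then d j else 0)"
    unfolding inner_sum_left
    by (rule sum.cong) (use assms in \<open>auto simp: orthonormal_on_def\<close>)
  then show ?thesis
    using assms(2) by simp
qed

lemma singular_system_inner_image:
  assumes ss: "singular_system A \<sigma> u v" and i: "i \<ge> 1"
  shows "inner (A x) (u i) = \<sigma> i * inner x (v i)"
proof -
  have u: "orthonormal_on {1..} u"
    using ss by (rule singular_system_orthonormal)
  have "((\<lambda>j. (\<sigma> j * inner x (v j)) *\<^sub>R u j) has_sum A x) {1..}"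
    using ss unfolding singular_system_def by blast
  then have "((\<lambda>j. inner ((\<sigma> j * inner x (v j)) *\<^sub>R u j) (u i)) has_sum inner (A x) (u i)) {1..}"
    by (rule has_sum_bounded_linear[OF bounded_linear_inner_left])
  moreover have "((\<lambda>j. inner ((\<sigma> j * inner x (v j)) *\<^sub>R u j) (u i)) has_sum \<sigma> i * inner x (v i)) {1..}"
    by (rule has_sum_finite_neutralI[where B = "{i}"]) (use u i in \<open>auto simp: orthonormal_on_def\<close>)
  ultimately show ?thesis
    using has_sum_unique by blast
qed

lemma tikh_trunc_error_expansion:
  assumes ss: "singular_system A \<sigma> u v" and x: "x = (\<Sum>i = 1..N. c i *\<^sub>R v i)"
    and L: "K \<le> L" "N \<le> L" and \<alpha>: "\<alpha> \<ge> 0"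
  shows "tikh_trunc \<sigma> u v K \<alpha> (A x + e) - x =
    (\<Sum>i = 1..L. (if i \<le> K then (\<sigma> i * inner e (u i) - \<alpha> * inner x (v i)) / ((\<sigma> i)\<^sup>2 + \<alpha>)
                  else - inner x (v i)) *\<^sub>R v i)"
proof -
  have v: "orthonormal_on {1..} v"
    using ss by (rule singular_system_orthonormal)
  have coeff: "inner x (v i) = (if i \<le> N then c i else 0)" if "i \<ge> 1" for i
    unfolding x using inner_sum_orthonormal[OF v, of "{1..N}" i c] that by auto
  have x_L: "x = (\<Sum>i = 1..L. inner x (v i) *\<^sub>R v i)"
    by (subst (1) x, rule sum.mono_neutral_cong_left) (use L coeff in auto)
  have T: "tikh_trunc \<sigma> u v K \<alpha> (A x + e) =
    (\<Sum>i = 1..L. (if i \<le> K then \<sigma> i / ((\<sigma> i)\<^sup>2 + \<alpha>) * inner (A x + e) (u i) else 0) *\<^sub>R v i)"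
    unfolding tikh_trunc_def by (rule sum.mono_neutral_cong_left) (use L in auto)
  have "(if i \<le> K then \<sigma> i / ((\<sigma> i)\<^sup>2 + \<alpha>) * inner (A x + e) (u i) else 0) - inner x (v i)
      = (if i \<le> K then (\<sigma> i * inner e (u i) - \<alpha> * inner x (v i)) / ((\<sigma> i)\<^sup>2 + \<alpha>)
         else - inner x (v i))" if i: "i \<in> {1..L}" for i
  proof -
    have "\<sigma> i > 0"
      using ss i unfolding singular_system_def by auto
    then have "(\<sigma> i)\<^sup>2 + \<alpha> > 0"
      using \<alpha> by (intro add_pos_nonneg) simp_all
    then show ?thesis
      using i by (simp add: inner_add_left singular_system_inner_image[OF ss] field_simps power2_eq_square)
  qed
  then show ?thesis
    unfolding T by (subst (2) x_L) (simp add: sum_subtractf[symmetric] scaleR_diff_left[symmetric])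
qed

lemma (in prob_space) expectation_affine_square:
  fixes X :: "'a \<Rightarrow> real"
  assumes "integrable M X" "integrable M (\<lambda>\<omega>. (X \<omega>)\<^sup>2)" "expectation X = 0"
  shows "integrable M (\<lambda>\<omega>. (a + b * X \<omega>)\<^sup>2)"
    and "expectation (\<lambda>\<omega>. (a + b * X \<omega>)\<^sup>2) = a\<^sup>2 + b\<^sup>2 * expectation (\<lambda>\<omega>. (X \<omega>)\<^sup>2)"
proof -
  have sq: "(\<lambda>\<omega>. (a + b * X \<omega>)\<^sup>2) = (\<lambda>\<omega>. a\<^sup>2 + (2 * a * b) * X \<omega> + b\<^sup>2 * (X \<omega>)\<^sup>2)"
    by (simp add: power2_eq_square algebra_simps)
  show "integrable M (\<lambda>\<omega>. (a + b * X \<omega>)\<^sup>2)"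
    "expectation (\<lambda>\<omega>. (a + b * X \<omega>)\<^sup>2) = a\<^sup>2 + b\<^sup>2 * expectation (\<lambda>\<omega>. (X \<omega>)\<^sup>2)"
    unfolding sq using assms by (simp_all add: prob_space)
qed

lemma expected_sq_error_tikh_trunc:
  assumes "prob_space M" and ss: "singular_system A \<sigma> u v" and x: "x = (\<Sum>i = 1..N. c i *\<^sub>R v i)"
    and L: "K \<le> L" "N \<le> L" and \<alpha>: "\<alpha> \<ge> 0"
    and mean: "\<forall>i\<ge>1. integrable M (\<lambda>\<omega>. inner (\<eta> \<omega>) (u i)) \<and>
                 integral\<^sup>L M (\<lambda>\<omega>. inner (\<eta> \<omega>) (u i)) = 0"
    and var: "\<forall>i\<ge>1. integrable M (\<lambda>\<omega>. (inner (\<eta> \<omega>) (u i))\<^sup>2) \<and>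
                 integral\<^sup>L M (\<lambda>\<omega>. (inner (\<eta> \<omega>) (u i))\<^sup>2) = (\<beta> i)\<^sup>2"
  shows "integral\<^sup>L M (\<lambda>\<omega>. (norm (tikh_trunc \<sigma> u v K \<alpha> (A x + \<eta> \<omega>) - x))\<^sup>2) =
    (\<Sum>i = 1..L. if i \<le> K then ((\<alpha> * inner x (v i))\<^sup>2 + (\<sigma> i * \<beta> i)\<^sup>2) / ((\<sigma> i)\<^sup>2 + \<alpha>)\<^sup>2
                 else (inner x (v i))\<^sup>2)"
proof -
  interpret prob_space M by fact
  define E where "E i \<omega> = (if i \<le> K
      then (\<sigma> i * inner (\<eta> \<omega>) (u i) - \<alpha> * inner x (v i)) / ((\<sigma> i)\<^sup>2 + \<alpha>)
      else - inner x (v i))" for i \<omega>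
  have component: "integrable M (\<lambda>\<omega>. (E i \<omega>)\<^sup>2) \<and> expectation (\<lambda>\<omega>. (E i \<omega>)\<^sup>2) =
      (if i \<le> K then ((\<alpha> * inner x (v i))\<^sup>2 + (\<sigma> i * \<beta> i)\<^sup>2) / ((\<sigma> i)\<^sup>2 + \<alpha>)\<^sup>2
       else (inner x (v i))\<^sup>2)" if i: "i \<ge> 1" for i
  proof (cases "i \<le> K")
    case True
    let ?d = "(\<sigma> i)\<^sup>2 + \<alpha>"
    let ?a = "- (\<alpha> * inner x (v i)) / ?d" and ?b = "\<sigma> i / ?d"
    have "E i = (\<lambda>\<omega>. ?a + ?b * inner (\<eta> \<omega>) (u i))"
      using True by (auto simp: E_def diff_divide_distrib)
    moreover have "?a\<^sup>2 + ?b\<^sup>2 * (\<beta> i)\<^sup>2 = ((\<alpha> * inner x (v i))\<^sup>2 + (\<sigma> i * \<beta> i)\<^sup>2) / ?d\<^sup>2"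
      by (simp add: power_divide power_mult_distrib add_divide_distrib)
    ultimately show ?thesis
      using True mean var i expectation_affine_square[of "\<lambda>\<omega>. inner (\<eta> \<omega>) (u i)" ?a ?b]
      by simp
  qed (simp add: E_def prob_space)
  have "integral\<^sup>L M (\<lambda>\<omega>. (norm (tikh_trunc \<sigma> u v K \<alpha> (A x + \<eta> \<omega>) - x))\<^sup>2)
      = expectation (\<lambda>\<omega>. \<Sum>i = 1..L. (E i \<omega>)\<^sup>2)"
    unfolding tikh_trunc_error_expansion[OF ss x L \<alpha>] E_def
    by (simp add: norm_sum_orthonormal[OF singular_system_orthonormal(2)[OF ss]])
  also have "\<dots> = (\<Sum>i = 1..L. expectation (\<lambda>\<omega>. (E i \<omega>)\<^sup>2))"
    by (rule Bochner_Integration.integral_sum) (use component in auto)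
  finally show ?thesis
    using component by simp
qed

lemma regularised_component_le_truncated:
  fixes \<alpha> \<sigma> \<xi> \<beta> :: real
  assumes "\<alpha> \<ge> 0" "\<sigma> > 0" "\<beta>\<^sup>2 \<le> \<xi>\<^sup>2 * (\<sigma>\<^sup>2 + 2 * \<alpha>)"
  shows "((\<alpha> * \<xi>)\<^sup>2 + (\<sigma> * \<beta>)\<^sup>2) / (\<sigma>\<^sup>2 + \<alpha>)\<^sup>2 \<le> \<xi>\<^sup>2"
proof -
  have "(\<sigma> * \<beta>)\<^sup>2 \<le> \<sigma>\<^sup>2 * (\<xi>\<^sup>2 * (\<sigma>\<^sup>2 + 2 * \<alpha>))"
    using assms(3) by (simp add: power_mult_distrib mult_left_mono)
  then have "(\<alpha> * \<xi>)\<^sup>2 + (\<sigma> * \<beta>)\<^sup>2 \<le> \<xi>\<^sup>2 * (\<sigma>\<^sup>2 + \<alpha>)\<^sup>2"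
    by (simp add: power2_eq_square algebra_simps)
  moreover have "(\<sigma>\<^sup>2 + \<alpha>)\<^sup>2 > 0"
    using assms(1,2) by (intro zero_less_power add_pos_nonneg) simp_all
  ultimately show ?thesis
    by (simp add: divide_le_eq)
qed

lemma noise_bound_of_regularisation_condition:
  fixes \<beta> c \<sigma> :: "nat \<Rightarrow> real"
  assumes "2 * \<alpha> \<ge> max 0 (Max ((\<lambda>m. (\<beta> (m + 1))\<^sup>2 / (c (m + 1))\<^sup>2 - (\<sigma> (m + 1))\<^sup>2) ` {0..<N}))"
    and i: "i \<in> {1..N}" and "c i \<noteq> 0"
  shows "(\<beta> i)\<^sup>2 \<le> (c i)\<^sup>2 * ((\<sigma> i)\<^sup>2 + 2 * \<alpha>)"
proof -
  have "(\<beta> i)\<^sup>2 / (c i)\<^sup>2 - (\<sigma> i)\<^sup>2 \<in> (\<lambda>m. (\<beta> (m + 1))\<^sup>2 / (c (m + 1))\<^sup>2 - (\<sigma> (m + 1))\<^sup>2) ` {0..<N}"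
    using i by (auto intro!: image_eqI[where x = "i - 1"])
  then have "(\<beta> i)\<^sup>2 / (c i)\<^sup>2 - (\<sigma> i)\<^sup>2 \<le> 2 * \<alpha>"
    using assms(1) by (meson Max_ge finite_atLeastLessThan finite_imageI max.bounded_iff order_trans)
  then show ?thesis
    using assms(3) by (simp add: field_simps)
qed

theorem theorem3:
  fixes A :: "'x::{real_inner, complete_space} \<Rightarrow> 'y::{real_inner, complete_space}"
    and \<sigma> :: "nat \<Rightarrow> real" and u :: "nat \<Rightarrow> 'y" and v :: "nat \<Rightarrow> 'x"
    and N :: nat and c :: "nat \<Rightarrow> real" and xdag :: 'x
    and M :: "'w measure" and \<eta> :: "'w \<Rightarrow> 'y" and \<beta> :: "nat \<Rightarrow> real"
    and \<alpha> :: real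
  assumes "compact_operator A"
    and "singular_system A \<sigma> u v"
    and "N \<ge> 1"
    and "xdag = (\<Sum>i = 1..N. c i *\<^sub>R v i)"
    and "\<forall>i\<in>{1..N}. c i = inner xdag (v i) \<and> c i \<noteq> 0"
    and "prob_space M"
    and "\<eta> \<in> borel_measurable M"
    and "\<forall>i\<ge>1. integrable M (\<lambda>\<omega>. inner (\<eta> \<omega>) (u i)) \<and>
                 integral\<^sup>L M (\<lambda>\<omega>. inner (\<eta> \<omega>) (u i)) = 0"
    and "\<forall>i\<ge>1. integrable M (\<lambda>\<omega>. (inner (\<eta> \<omega>) (u i))\<^sup>2) \<and>
                 integral\<^sup>L M (\<lambda>\<omega>. (inner (\<eta> \<omega>) (u i))\<^sup>2) = (\<beta> i)\<^sup>2"
    and "\<alpha> > 0"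
    and "2 * \<alpha> \<ge> max 0 (Max ((\<lambda>m. (\<beta> (m + 1))\<^sup>2 / (c (m + 1))\<^sup>2 - (\<sigma> (m + 1))\<^sup>2) ` {0..<N}))"
  shows "\<forall>K::nat.
           integral\<^sup>L M (\<lambda>\<omega>. (norm (tikh_trunc \<sigma> u v N \<alpha> (A xdag + \<eta> \<omega>) - xdag))\<^sup>2)
         \<le> integral\<^sup>L M (\<lambda>\<omega>. (norm (tikh_trunc \<sigma> u v K \<alpha> (A xdag + \<eta> \<omega>) - xdag))\<^sup>2)"
proof
  fix K :: nat
  let ?E = "\<lambda>J. integral\<^sup>L M (\<lambda>\<omega>. (norm (tikh_trunc \<sigma> u v J \<alpha> (A xdag + \<eta> \<omega>) - xdag))\<^sup>2)"
  let ?L = "max K N"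
  let ?R = "\<lambda>i. ((\<alpha> * inner xdag (v i))\<^sup>2 + (\<sigma> i * \<beta> i)\<^sup>2) / ((\<sigma> i)\<^sup>2 + \<alpha>)\<^sup>2"
  have \<sigma>: "\<sigma> i > 0" if "i \<ge> 1" for i
    using assms(2) that unfolding singular_system_def by blast
  have beyond_N: "inner xdag (v i) = 0" if "i > N" for i
    using inner_sum_orthonormal[OF singular_system_orthonormal(2)[OF assms(2)], of "{1..N}" i c] that
    by (simp add: assms(4))
  have up_to_N: "?R i \<le> (inner xdag (v i))\<^sup>2" if i: "i \<in> {1..N}" for i
  proof -
    have "c i = inner xdag (v i)" "c i \<noteq> 0"
      using bspec[OF assms(5) i] by auto
    then show ?thesis
      using assms(10) i \<sigma>[of i] noise_bound_of_regularisation_condition[OF assms(11) i]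
      by (intro regularised_component_le_truncated) auto
  qed
  have componentwise: "(if i \<le> N then ?R i else (inner xdag (v i))\<^sup>2)
      \<le> (if i \<le> K then ?R i else (inner xdag (v i))\<^sup>2)"
    if "i \<in> {1..?L}" for i
    using that up_to_N[of i] beyond_N[of i] by auto
  have expected: "?E J = (\<Sum>i = 1..?L. if i \<le> J then ?R i else (inner xdag (v i))\<^sup>2)" if "J \<le> ?L" for J
    using that assms(10) by (intro expected_sq_error_tikh_trunc[OF assms(6,2,4) _ _ _ assms(8,9)]) auto
  have "?E N = (\<Sum>i = 1..?L. if i \<le> N then ?R i else (inner xdag (v i))\<^sup>2)"
    by (rule expected) simp
  also have "\<dots> \<le> (\<Sum>i = 1..?L. if i \<le> K then ?R i else (inner xdag (v i))\<^sup>2)"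
    by (rule sum_mono) (rule componentwise)
  also have "\<dots> = ?E K"
    by (rule expected[symmetric]) simp
  finally show "?E N \<le> ?E K" .
qed

end
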